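(* Let $(T,f,(\le_h))$ and $(T',f',(\le'_h))$ be ordered merge trees and $\delta\ge0$. If there exists a monotone $\delta$-interleaving between them, then there exists a monotone $\delta$-good map $T\to T'$.
   Context: A merge tree $(T,f)$: a finite rooted tree $T$ identified with its topological realisation, with a continuous $f\colon T\to\mathbb{R}\cup\{\infty\}$ strictly increasing towards the root, $f(v)=\infty$ iff $v$ is the root; lowest leaf at height $0$. $x_1\preceq x_2$ ($x_2$ ancestor of $x_1$) iff there is an $f$-increasing path from $x_1$ to $x_2$; $\mathrm{anc}_h(x)$ is the unique ancestor of $x$ at height $h\ge f(x)$; $x^\delta:=\mathrm{anc}_{f(x)+\delta}(x)$; $\mathbb{L}_h=\{x:f(x)=h\}$. A layer-order is a family $(\le_h)_{h\ge0}$ of total orders on the $\mathbb{L}_h$ that is consistent ($h_1\le h_2$, $x_1\le_{h_1}x_2$ imply $\mathrm{anc}_{h_2}(x_1)\le_{h_2}\mathrm{anc}_{h_2}(x_2)$); $(T,f,(\le_h))$ is an ordered merge tree. A map $\alpha\colon T\to T'$ with $f'(\alpha(x))=f(x)+\delta$ for all $x$ is monotone if for all $h$ and $x_1,x_2\in\mathbb{L}_h$, $x_1\le_h x_2$ implies $\alpha(x_1)\le'_{h+\delta}\alpha(x_2)$. A $\delta$-interleaving is a pair of continuous maps $\alpha\colon T\to T'$, $\beta\colon T'\to T$ with $f'(\alpha(x))=f(x)+\delta$, $\beta(\alpha(x))=x^{2\delta}$, $f(\beta(y))=f'(y)+\delta$, $\alpha(\beta(y))=y^{2\delta}$ for all $x\in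 T,y\in T'$; it is monotone if $\alpha$ and $\beta$ are. A $\delta$-good map is a continuous map $\alpha\colon T\to T'$ with (G1) $f'(\alpha(x))=f(x)+\delta$ for all $x$; (G2) if $\alpha(x_1)\succeq\alpha(x_2)$ then $x_1^{2\delta}\succeq x_2^{2\delta}$; (G3) $|f'(y^F)-f'(y)|\le2\delta$ for all $y\in T'\setminus\mathrm{Im}(\alpha)$, where $y^F$ is the lowest ancestor of $y$ in $\mathrm{Im}(\alpha)$. A monotone $\delta$-good map is a $\delta$-good map that is monotone. *)

theory Defs
  imports "HOL-Analysis.Analysis" "HOL-Library.Extended_Real"
begin

record 'v mtree =
  verts :: "'v set"
  par   :: "'v \<Rightarrow> 'v"
  rt    :: "'v"
  hv    :: "'v \<Rightarrow> ereal"

definition merge_tree :: "'v mtree \<Rightarrow> bool" where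
  "merge_tree M \<longleftrightarrow>
     finite (verts M) \<and> rt M \<in> verts M \<and> hv M (rt M) = \<infinity> \<and>
     (\<forall>v\<in>verts M - {rt M}. par M v \<in> verts M \<and> hv M v < hv M (par M v)
          \<and> (\<exists>h::real. hv M v = ereal h) \<and> (\<exists>n. (par M ^^ n) v = rt M)) \<and>
     (\<exists>v\<in>verts M. hv M v = 0) \<and> (\<forall>v\<in>verts M. 0 \<le> hv M v)"

inductive vanc :: "'v mtree \<Rightarrow> 'v \<Rightarrow> 'v \<Rightarrow> bool" for M where
  vanc_refl: "vanc M v v"
| vanc_step: "v \<noteq> rt M \<Longrightarrow> vanc M (par M v) u \<Longrightarrow> vanc M v u"

text \<open>Points of the topological realisation, parametrised by height: a point is a
  pair (v, h) with v a non-root vertex and h in [f v, f (parent v)) (on the edge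
  from v to its parent), or the root (rt, infinity). The second component is f.\<close>
definition pts :: "'v mtree \<Rightarrow> ('v \<times> ereal) set" where
  "pts M = {(v, ereal h) | v h. v \<in> verts M - {rt M} \<and> hv M v \<le> ereal h
                                \<and> ereal h < hv M (par M v)} \<union> {(rt M, \<infinity>)}"

definition anc_le :: "'v mtree \<Rightarrow> 'v \<times> ereal \<Rightarrow> 'v \<times> ereal \<Rightarrow> bool" where
  "anc_le M x y \<longleftrightarrow> x \<in> pts M \<and> y \<in> pts M \<and> snd x \<le> snd y \<and> vanc M (fst x) (fst y)"

definition anc :: "'v mtree \<Rightarrow> ereal \<Rightarrow> 'v \<times> ereal \<Rightarrow> 'v \<times> ereal" where
  "anc M h x = (THE y. anc_le M x y \<and> snd y = h)"

definition shift :: "'v mtree \<Rightarrow> real \<Rightarrow> 'v \<times> ereal \<Rightarrow> 'v \<times> ereal" where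
  "shift M d x = anc M (snd x + ereal d) x"

definition layer :: "'v mtree \<Rightarrow> real \<Rightarrow> ('v \<times> ereal) set" where
  "layer M h = {x \<in> pts M. snd x = ereal h}"

definition layer_order :: "'v mtree \<Rightarrow> (real \<Rightarrow> (('v \<times> ereal) \<times> ('v \<times> ereal)) set) \<Rightarrow> bool" where
  "layer_order M lo \<longleftrightarrow>
     (\<forall>h\<ge>0. lo h \<subseteq> layer M h \<times> layer M h \<and> linear_order_on (layer M h) (lo h)) \<and>
     (\<forall>h1 h2 x1 x2. 0 \<le> h1 \<longrightarrow> h1 \<le> h2 \<longrightarrow> (x1, x2) \<in> lo h1 \<longrightarrow>
        (anc M (ereal h2) x1, anc M (ereal h2) x2) \<in> lo h2)"

text \<open>Topology of the realisation: path metric along edges, measured in the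
  reparametrised height phi(h) = h/(1+|h|), phi(infinity) = 1, which makes every
  edge (including the one to the root) of finite length; this metric induces
  the CW topology of the finite graph realisation.\<close>
fun phi :: "ereal \<Rightarrow> real" where
  "phi (ereal h) = h / (1 + \<bar>h\<bar>)"
| "phi _ = 1"

definition mdist :: "'v mtree \<Rightarrow> 'v \<times> ereal \<Rightarrow> 'v \<times> ereal \<Rightarrow> real" where
  "mdist M x y = Inf {2 * phi (snd z) - phi (snd x) - phi (snd y) | z. anc_le M x z \<and> anc_le M y z}"

definition mt_continuous :: "'v mtree \<Rightarrow> 'w mtree \<Rightarrow> ('v \<times> ereal \<Rightarrow> 'w \<times> ereal) \<Rightarrow> bool" where
  "mt_continuous M M' a \<longleftrightarrow>
     (\<forall>x\<in>pts M. \<forall>e>0. \<exists>d>0. \<forall>y\<in>pts M. mdist M x y < d \<longrightarrow> mdist M' (a x) (a y) < e)"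

definition delta_interleaving ::
  "'v mtree \<Rightarrow> 'w mtree \<Rightarrow> real \<Rightarrow> ('v \<times> ereal \<Rightarrow> 'w \<times> ereal) \<Rightarrow> ('w \<times> ereal \<Rightarrow> 'v \<times> ereal) \<Rightarrow> bool" where
  "delta_interleaving M M' d a b \<longleftrightarrow>
     a \<in> pts M \<rightarrow> pts M' \<and> b \<in> pts M' \<rightarrow> pts M \<and>
     mt_continuous M M' a \<and> mt_continuous M' M b \<and>
     (\<forall>x\<in>pts M. snd (a x) = snd x + ereal d \<and> b (a x) = shift M (2 * d) x) \<and>
     (\<forall>y\<in>pts M'. snd (b y) = snd y + ereal d \<and> a (b y) = shift M' (2 * d) y)"

definition monotone_map ::
  "'v mtree \<Rightarrow> (real \<Rightarrow> (('v \<times> ereal) \<times> ('v \<times> ereal)) set) \<Rightarrow>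
   'w mtree \<Rightarrow> (real \<Rightarrow> (('w \<times> ereal) \<times> ('w \<times> ereal)) set) \<Rightarrow> real \<Rightarrow>
   ('v \<times> ereal \<Rightarrow> 'w \<times> ereal) \<Rightarrow> bool" where
  "monotone_map M lo M' lo' d a \<longleftrightarrow>
     (\<forall>h x1 x2. x1 \<in> layer M h \<longrightarrow> x2 \<in> layer M h \<longrightarrow> (x1, x2) \<in> lo h \<longrightarrow>
        (a x1, a x2) \<in> lo' (h + d))"

definition lowest_anc_in :: "'v mtree \<Rightarrow> ('v \<times> ereal) set \<Rightarrow> 'v \<times> ereal \<Rightarrow> 'v \<times> ereal" where
  "lowest_anc_in M S y = (THE z. z \<in> S \<and> anc_le M y z \<and>
                             (\<forall>z'\<in>S. anc_le M y z' \<longrightarrow> snd z \<le> snd z'))"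

definition good_map :: "'v mtree \<Rightarrow> 'w mtree \<Rightarrow> real \<Rightarrow> ('v \<times> ereal \<Rightarrow> 'w \<times> ereal) \<Rightarrow> bool" where
  "good_map M M' d a \<longleftrightarrow>
     a \<in> pts M \<rightarrow> pts M' \<and> mt_continuous M M' a \<and>
     (\<forall>x\<in>pts M. snd (a x) = snd x + ereal d) \<and>
     (\<forall>x1\<in>pts M. \<forall>x2\<in>pts M. anc_le M' (a x2) (a x1) \<longrightarrow>
         anc_le M (shift M (2 * d) x2) (shift M (2 * d) x1)) \<and>
     (\<forall>y\<in>pts M' - a ` pts M.
         \<bar>snd (lowest_anc_in M' (a ` pts M) y) - snd y\<bar> \<le> ereal (2 * d))"

end

theory Submission
  imports Defs
begin

text \<open>Take for the good map the first map \<open>\<alpha>\<close> of the interleaving; it is already monotone.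
  The heart of the matter is that a continuous map shifting heights by \<open>\<delta>\<close> preserves ancestry.
  Along the path \<open>t \<mapsto> anc\<^sub>t y\<close> the set of \<open>t\<close> with \<open>\<alpha>(anc\<^sub>t y) \<succeq> \<alpha> y\<close> is closed from the left
  and open to the right, because distinct points at the same height are a definite distance apart
  (any path between them climbs to the parent of one of them); a real induction does the rest.
  Applied to \<open>\<beta>\<close>, together with \<open>\<beta>(\<alpha> x) = x\<^sup>2\<^sup>\<delta>\<close>, this gives (G2).
  For (G3), \<open>\<alpha>(\<beta> y) = y\<^sup>2\<^sup>\<delta>\<close> is an ancestor of \<open>y\<close> in the image, and the lowest one exists
  because points of the image can be slid down to one of finitely many critical heights.\<close>

section \<open>Ancestry in a merge tree\<close>

lemma merge_treeD:
  assumes "merge_tree M"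
  shows "finite (verts M)" "rt M \<in> verts M" "hv M (rt M) = \<infinity>"
    "\<And>v. v \<in> verts M \<Longrightarrow> v \<noteq> rt M \<Longrightarrow> par M v \<in> verts M"
    "\<And>v. v \<in> verts M \<Longrightarrow> v \<noteq> rt M \<Longrightarrow> hv M v < hv M (par M v)"
    "\<And>v. v \<in> verts M \<Longrightarrow> v \<noteq> rt M \<Longrightarrow> \<exists>h. hv M v = ereal h"
    "\<And>v. v \<in> verts M \<Longrightarrow> v \<noteq> rt M \<Longrightarrow> \<exists>n. (par M ^^ n) v = rt M"
  using assms unfolding merge_tree_def by auto

lemma vanc_in_verts: "vanc M v u \<Longrightarrow> merge_tree M \<Longrightarrow> v \<in> verts M \<Longrightarrow> u \<in> verts M"
  by (induction rule: vanc.induct) (auto dest: merge_treeD(4))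

lemma vanc_trans: "vanc M v u \<Longrightarrow> vanc M u w \<Longrightarrow> vanc M v w"
  by (induction rule: vanc.induct) (simp_all add: vanc_step)

lemma vanc_par_hv_le:
  "vanc M v u \<Longrightarrow> merge_tree M \<Longrightarrow> v \<in> verts M \<Longrightarrow> v \<noteq> u \<Longrightarrow>
   v \<noteq> rt M \<and> hv M (par M v) \<le> hv M u"
proof (induction rule: vanc.induct)
  case (vanc_step v u)
  have pv: "par M v \<in> verts M" using merge_treeD(4) vanc_step.prems(1,2) vanc_step.hyps(1) .
  show ?case
  proof (cases "par M v = u")
    case False
    with vanc_step.IH pv vanc_step.prems(1)
    have "par M v \<noteq> rt M" "hv M (par M (par M v)) \<le> hv M u" by auto
    moreover have "hv M (par M v) < hv M (par M (par M v))"
      using merge_treeD(5) vanc_step.prems(1) pv \<open>par M v \<noteq> rt M\<close> .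
    ultimately show ?thesis using vanc_step.hyps(1) by simp
  qed (use vanc_step.hyps(1) in simp)
qed simp

lemma vanc_hv_le:
  assumes "vanc M v u" "merge_tree M" "v \<in> verts M"
  shows "hv M v \<le> hv M u"
proof (cases "v = u")
  case False
  then have "v \<noteq> rt M" "hv M (par M v) \<le> hv M u" using vanc_par_hv_le[OF assms] by auto
  moreover have "hv M v < hv M (par M v)" using merge_treeD(5)[OF assms(2,3) \<open>v \<noteq> rt M\<close>] .
  ultimately show ?thesis by simp
qed simp

lemma vanc_linear: "vanc M v u1 \<Longrightarrow> vanc M v u2 \<Longrightarrow> vanc M u1 u2 \<or> vanc M u2 u1"
proof (induction arbitrary: u2 rule: vanc.induct)
  case (vanc_step v u)
  from vanc_step.prems show ?case
    by cases (use vanc_step in \<open>auto intro: vanc.intros\<close>)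
qed simp

lemma vanc_rt:
  assumes "merge_tree M" "v \<in> verts M"
  shows "vanc M v (rt M)"
proof -
  have "vanc M v (rt M)" if "v \<in> verts M" "(par M ^^ n) v = rt M" for n v
    using that
  proof (induction n arbitrary: v)
    case (Suc n)
    show ?case
    proof (cases "v = rt M")
      case False
      have "(par M ^^ n) (par M v) = rt M" using Suc.prems(2) unfolding funpow_Suc_right by simp
      then show ?thesis
        using Suc.IH merge_treeD(4)[OF assms(1) Suc.prems(1) False] False by (auto intro: vanc_step)
    qed (auto intro: vanc_refl)
  qed (auto intro: vanc_refl)
  moreover obtain n where "(par M ^^ n) v = rt M"
    using merge_treeD(7)[OF assms] by (cases "v = rt M") (metis funpow_0, auto)
  ultimately show ?thesis using assms(2) by blast
qed

lemma vanc_antisym: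
  assumes M: "merge_tree M" and v: "v \<in> verts M" and vu: "vanc M v u" and uv: "vanc M u v"
  shows "u = v"
proof (rule ccontr)
  assume "u \<noteq> v"
  then have "v \<noteq> rt M" "hv M (par M v) \<le> hv M u" using vanc_par_hv_le[OF vu M v] by auto
  moreover have "hv M v < hv M (par M v)" using merge_treeD(5)[OF M v \<open>v \<noteq> rt M\<close>] .
  moreover have "hv M u \<le> hv M v" using vanc_hv_le[OF uv M vanc_in_verts[OF vu M v]] .
  ultimately show False by simp
qed

section \<open>Points of the realisation\<close>

lemma pts_cases:
  assumes "x \<in> pts M"
  obtains "x = (rt M, \<infinity>)"
  | v h where "x = (v, ereal h)" "v \<in> verts M" "v \<noteq> rt M" "hv M v \<le> ereal h" "ereal h < hv M (par M v)"
  using assms unfolding pts_def by auto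

lemma root_in_pts: "(rt M, \<infinity>) \<in> pts M"
  unfolding pts_def by auto

lemma edge_point_in_pts:
  "v \<in> verts M \<Longrightarrow> v \<noteq> rt M \<Longrightarrow> hv M v \<le> ereal h \<Longrightarrow> ereal h < hv M (par M v) \<Longrightarrow> (v, ereal h) \<in> pts M"
  unfolding pts_def by auto

lemma fst_pts_in_verts: "merge_tree M \<Longrightarrow> x \<in> pts M \<Longrightarrow> fst x \<in> verts M"
  by (erule pts_cases) (auto dest: merge_treeD)

lemma hv_fst_pts_le: "merge_tree M \<Longrightarrow> x \<in> pts M \<Longrightarrow> hv M (fst x) \<le> snd x"
  by (erule pts_cases) (auto dest: merge_treeD)

lemma pts_infinite: "x \<in> pts M \<Longrightarrow> snd x = \<infinity> \<Longrightarrow> x = (rt M, \<infinity>)"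
  by (erule pts_cases) auto

lemma pts_finite:
  "x \<in> pts M \<Longrightarrow> snd x \<noteq> \<infinity> \<Longrightarrow> fst x \<noteq> rt M \<and> snd x < hv M (par M (fst x)) \<and> (\<exists>h. snd x = ereal h)"
  by (erule pts_cases) auto

lemma anc_le_in_pts: "anc_le M x y \<Longrightarrow> x \<in> pts M \<and> y \<in> pts M"
  unfolding anc_le_def by auto

lemma anc_le_refl: "x \<in> pts M \<Longrightarrow> anc_le M x x"
  unfolding anc_le_def by (auto intro: vanc_refl)

lemma anc_le_trans: "anc_le M x y \<Longrightarrow> anc_le M y z \<Longrightarrow> anc_le M x z"
  unfolding anc_le_def by (auto intro: vanc_trans)

lemma anc_le_root: "merge_tree M \<Longrightarrow> x \<in> pts M \<Longrightarrow> anc_le M x (rt M, \<infinity>)"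
  unfolding anc_le_def using root_in_pts vanc_rt fst_pts_in_verts by fastforce

lemma anc_le_antisym:
  assumes "merge_tree M" "anc_le M x y" "anc_le M y x"
  shows "x = y"
proof (rule prod_eqI)
  show "fst x = fst y"
    using assms vanc_antisym[OF assms(1) fst_pts_in_verts[OF assms(1)]] unfolding anc_le_def by metis
  show "snd x = snd y" using assms(2,3) unfolding anc_le_def by (simp add: antisym)
qed

lemma anc_le_linear:
  assumes M: "merge_tree M" and xz1: "anc_le M x z1" and xz2: "anc_le M x z2" and le: "snd z1 \<le> snd z2"
  shows "anc_le M z1 z2"
proof -
  have z1: "z1 \<in> pts M" and z2: "z2 \<in> pts M"
    and v1: "vanc M (fst x) (fst z1)" and v2: "vanc M (fst x) (fst z2)"
    using xz1 xz2 unfolding anc_le_def by auto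
  have "vanc M (fst z1) (fst z2)"
  proof (rule ccontr)
    assume not12: "\<not> vanc M (fst z1) (fst z2)"
    then have v21: "vanc M (fst z2) (fst z1)" and ne: "fst z2 \<noteq> fst z1"
      using vanc_linear[OF v1 v2] vanc_refl by metis+
    have "hv M (par M (fst z2)) \<le> hv M (fst z1)"
      using vanc_par_hv_le[OF v21 M fst_pts_in_verts[OF M z2] ne] by blast
    also have "\<dots> \<le> snd z1" using hv_fst_pts_le[OF M z1] .
    finally have "hv M (par M (fst z2)) \<le> snd z2" using le by simp
    moreover have "snd z2 \<noteq> \<infinity>"
      using pts_infinite[OF z2] not12 vanc_rt[OF M fst_pts_in_verts[OF M z1]] by auto
    ultimately show False using pts_finite[OF z2] by auto
  qed
  then show ?thesis using z1 z2 le unfolding anc_le_def by auto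
qed

lemma anc_le_unique_height:
  "merge_tree M \<Longrightarrow> anc_le M x y1 \<Longrightarrow> anc_le M x y2 \<Longrightarrow> snd y1 = snd y2 \<Longrightarrow> y1 = y2"
  using anc_le_linear anc_le_antisym by (metis order.refl)

text \<open>The ancestor at height \<open>r\<close> lies on the edge of the highest vertex above \<open>x\<close> of height at most \<open>r\<close>.\<close>
lemma anc_le_exists:
  assumes M: "merge_tree M" and x: "x \<in> pts M" and h: "snd x \<le> h"
  shows "\<exists>y. anc_le M x y \<and> snd y = h"
proof (cases "h = \<infinity>")
  case True
  then show ?thesis using anc_le_root[OF M x] by (intro exI[of _ "(rt M, \<infinity>)"]) simp
next
  case False
  with h pts_finite[OF x] obtain r where r: "h = ereal r" by (cases h) auto
  define U where "U = {u. vanc M (fst x) u \<and> hv M u \<le> ereal r}"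
  have U_verts: "U \<subseteq> verts M" using vanc_in_verts[OF _ M fst_pts_in_verts[OF M x]] unfolding U_def by blast
  have "fst x \<in> U" unfolding U_def using hv_fst_pts_le[OF M x] h r by (auto intro: vanc_refl)
  moreover have "finite U" using finite_subset[OF U_verts merge_treeD(1)[OF M]] .
  ultimately have "Max (hv M ` U) \<in> hv M ` U" by (intro Max_in) auto
  then obtain u where uU: "u \<in> U" and u_Max: "hv M u = Max (hv M ` U)" by auto
  have u_max: "hv M u' \<le> hv M u" if "u' \<in> U" for u'
    using that \<open>finite U\<close> u_Max by simp
  have uV: "u \<in> verts M" using uU U_verts by blast
  have u_rt: "u \<noteq> rt M" using uU merge_treeD(3)[OF M] unfolding U_def by auto
  have u_par: "hv M u < hv M (par M u)" using merge_treeD(5)[OF M uV u_rt] .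
  have "vanc M (fst x) (par M u)"
    using uU u_rt unfolding U_def by (auto intro: vanc_trans[of M "fst x" u] vanc_step vanc_refl)
  moreover have "par M u \<notin> U" using u_max[of "par M u"] u_par by fastforce
  ultimately have "ereal r < hv M (par M u)" unfolding U_def by auto
  then have "(u, ereal r) \<in> pts M" using edge_point_in_pts[OF uV u_rt] uU unfolding U_def by auto
  then show ?thesis using x uU h r unfolding anc_le_def U_def by (intro exI[of _ "(u, ereal r)"]) auto
qed

lemma
  assumes "merge_tree M" "x \<in> pts M" "snd x \<le> h"
  shows anc_le_anc: "anc_le M x (anc M h x)" and snd_anc: "snd (anc M h x) = h"
proof -
  have "\<exists>!y. anc_le M x y \<and> snd y = h"
    using anc_le_exists[OF assms] anc_le_unique_height[OF assms(1)] by blast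
  then have "anc_le M x (anc M h x) \<and> snd (anc M h x) = h" unfolding anc_def by (rule theI')
  then show "anc_le M x (anc M h x)" "snd (anc M h x) = h" by auto
qed

lemma anc_snd_eq: "merge_tree M \<Longrightarrow> anc_le M x y \<Longrightarrow> anc M (snd y) x = y"
  unfolding anc_def by (rule the_equality) (auto intro: anc_le_unique_height)

lemma lowest_anc_in_eqI:
  assumes M: "merge_tree M" and z: "z \<in> S" "anc_le M y z"
    and lowest: "\<And>z'. z' \<in> S \<Longrightarrow> anc_le M y z' \<Longrightarrow> snd z \<le> snd z'"
  shows "lowest_anc_in M S y = z"
  unfolding lowest_anc_in_def
proof (rule the_equality)
  show "z \<in> S \<and> anc_le M y z \<and> (\<forall>z'\<in>S. anc_le M y z' \<longrightarrow> snd z \<le> snd z')"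
    using z lowest by blast
next
  fix w assume w: "w \<in> S \<and> anc_le M y w \<and> (\<forall>z'\<in>S. anc_le M y z' \<longrightarrow> snd w \<le> snd z')"
  then have "snd w = snd z" using z lowest by (meson antisym)
  then show "w = z" using anc_le_unique_height[OF M] w z(2) by blast
qed

lemma anc_le_anc_mono:
  assumes M: "merge_tree M" and x: "x \<in> pts M" and s: "snd x \<le> ereal s" and st: "s \<le> t"
  shows "anc_le M (anc M (ereal s) x) (anc M (ereal t) x)"
proof -
  have t: "snd x \<le> ereal t" using s st by (simp add: order_trans)
  show ?thesis
    by (rule anc_le_linear[OF M anc_le_anc[OF M x s] anc_le_anc[OF M x t]])
       (use snd_anc[OF M x s] snd_anc[OF M x t] st in simp)
qed

lemma anc_le_same_edge:
  assumes M: "merge_tree M" and pq: "anc_le M p q" and fin: "snd q \<noteq> \<infinity>" and h: "hv M (fst q) \<le> snd p"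
  shows "fst p = fst q"
proof (rule ccontr)
  assume ne: "fst p \<noteq> fst q"
  have p: "p \<in> pts M" and v: "vanc M (fst p) (fst q)" and le: "snd p \<le> snd q"
    using pq unfolding anc_le_def by auto
  have "snd p \<noteq> \<infinity>" using le fin by auto
  then have "snd p < hv M (par M (fst p))" using pts_finite[OF p] by blast
  moreover have "hv M (par M (fst p)) \<le> hv M (fst q)"
    using vanc_par_hv_le[OF v M fst_pts_in_verts[OF M p] ne] by blast
  ultimately show False using h by auto
qed

lemma anc_le_same_edge_eq:
  assumes M: "merge_tree M" and pw: "anc_le M p w" and p'w: "anc_le M p' w" and h: "snd p = snd p'"
    and fin: "snd w \<noteq> \<infinity>" and above: "hv M (fst w) \<le> snd p"
  shows "p = p'"
  using anc_le_same_edge[OF M pw fin] anc_le_same_edge[OF M p'w fin] h above by (simp add: prod_eq_iff)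

lemma par_hv_mono:
  assumes M: "merge_tree M" and pq: "anc_le M p q" and fin: "snd q \<noteq> \<infinity>"
  shows "hv M (par M (fst p)) \<le> hv M (par M (fst q))"
proof (cases "fst p = fst q")
  case False
  have p: "p \<in> pts M" and q: "q \<in> pts M" and v: "vanc M (fst p) (fst q)"
    using pq unfolding anc_le_def by auto
  have "hv M (par M (fst p)) \<le> hv M (fst q)" using vanc_par_hv_le[OF v M fst_pts_in_verts[OF M p] False] by blast
  also have "\<dots> \<le> snd q" using hv_fst_pts_le[OF M q] .
  also have "\<dots> < hv M (par M (fst q))" using pts_finite[OF q fin] by blast
  finally show ?thesis by simp
qed simp

lemma common_anc_above_par:
  assumes M: "merge_tree M" and p: "p \<in> pts M" and qq': "anc_le M q q'" and h: "snd q' = snd p"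
    and fin: "snd p \<noteq> \<infinity>" and ne: "p \<noteq> q'" and pz: "anc_le M p z" and qz: "anc_le M q z"
  shows "hv M (par M (fst q')) \<le> snd z"
proof -
  have q': "q' \<in> pts M" using anc_le_in_pts[OF qq'] by blast
  have "snd q' \<le> snd z" using pz h unfolding anc_le_def by simp
  then have q'z: "anc_le M q' z" using anc_le_linear[OF M qq' qz] by simp
  have fne: "fst q' \<noteq> fst p" using ne h by (auto simp: prod_eq_iff)
  show ?thesis
  proof (cases "fst z = fst q'")
    case True
    have "vanc M (fst p) (fst q')" using pz True unfolding anc_le_def by simp
    then have "hv M (par M (fst p)) \<le> hv M (fst q')"
      using vanc_par_hv_le[OF _ M fst_pts_in_verts[OF M p]] fne by auto
    also have "\<dots> \<le> snd p" using hv_fst_pts_le[OF M q'] h by simp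
    finally show ?thesis using pts_finite[OF p fin] by (meson leD)
  next
    case False
    have "vanc M (fst q') (fst z)" using q'z unfolding anc_le_def by simp
    then have "hv M (par M (fst q')) \<le> hv M (fst z)"
      using vanc_par_hv_le[OF _ M fst_pts_in_verts[OF M q']] False by auto
    also have "\<dots> \<le> snd z" using hv_fst_pts_le[OF M] anc_le_in_pts[OF pz] by blast
    finally show ?thesis .
  qed
qed

section \<open>The path metric\<close>

text \<open>The equations of \<open>phi\<close> are stated for the constructors \<open>PInfty\<close>, \<open>MInfty\<close>, which the
  simplifier does not match against \<open>\<infinity>\<close>.\<close>

lemma phi_PInfty [simp]: "phi \<infinity> = 1"
  using phi.simps(2) by (simp only: PInfty_eq_infinity)

lemma phi_MInfty [simp]: "phi (-\<infinity>) = 1"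
  using phi.simps(3) by (simp only: MInfty_eq_minfinity)

lemma phi_real_mono: "(x::real) \<le> y \<Longrightarrow> x / (1 + \<bar>x\<bar>) \<le> y / (1 + \<bar>y\<bar>)"
  using mult_nonpos_nonneg[of x y] by (auto simp: field_simps abs_if)

lemma phi_real_strict_mono: "(x::real) < y \<Longrightarrow> x / (1 + \<bar>x\<bar>) < y / (1 + \<bar>y\<bar>)"
  using mult_nonpos_nonneg[of x y] by (auto simp: field_simps abs_if)

lemma phi_real_lipschitz: "(x::real) \<le> y \<Longrightarrow> y / (1 + \<bar>y\<bar>) - x / (1 + \<bar>x\<bar>) \<le> y - x"
proof -
  assume xy: "x \<le> y"
  consider "0 \<le> x" | "y \<le> 0" | "x < 0" "0 < y" by linarith
  then show ?thesis
  proof cases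
    case 1
    then have "1 \<le> (1 + x) * (1 + y)" using xy by (simp add: algebra_simps)
    then have "(y - x) / ((1 + x) * (1 + y)) \<le> y - x" using xy by (simp add: divide_le_eq mult_le_cancel_left1)
    then show ?thesis using 1 xy by (simp add: field_simps)
  next
    case 2
    then have "0 \<le> x * y" using xy mult_nonpos_nonpos[of x y] by linarith
    then have "1 \<le> (1 - x) * (1 - y)" using 2 xy by (simp add: algebra_simps)
    then have "(y - x) / ((1 - x) * (1 - y)) \<le> y - x" using xy by (simp add: divide_le_eq mult_le_cancel_left1)
    then show ?thesis using 2 xy by (simp add: field_simps)
  next
    case 3
    have "\<bar>z / (1 + \<bar>z\<bar>)\<bar> \<le> \<bar>z\<bar>" for z :: real
    proof -
      have "\<bar>z / (1 + \<bar>z\<bar>)\<bar> = \<bar>z\<bar> / (1 + \<bar>z\<bar>)" by simp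
      also have "\<dots> \<le> \<bar>z\<bar> / 1" by (intro divide_left_mono) auto
      finally show ?thesis by simp
    qed
    from this[of x] this[of y] show ?thesis using 3 by (simp add: abs_if split: if_splits)
  qed
qed

lemma phi_abs_le_1: "\<bar>phi x\<bar> \<le> 1"
  by (cases x) simp_all

lemma phi_mono: "a \<le> b \<Longrightarrow> a \<noteq> -\<infinity> \<Longrightarrow> phi a \<le> phi b"
  by (cases a; cases b) (auto intro: phi_real_mono)

lemma phi_strict_mono: "a < b \<Longrightarrow> a \<noteq> -\<infinity> \<Longrightarrow> phi a < phi b"
  by (cases a; cases b) (auto intro: phi_real_strict_mono)

lemma phi_ereal_lipschitz: "x \<le> y \<Longrightarrow> phi (ereal y) - phi (ereal x) \<le> y - x"
  using phi_real_lipschitz by simp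

lemma mdist_commute: "mdist M x y = mdist M y x"
  unfolding mdist_def by (rule arg_cong[where f = Inf]) (auto simp: algebra_simps)

lemma mdist_le_common_anc:
  assumes "anc_le M x z" "anc_le M y z"
  shows "mdist M x y \<le> 2 * phi (snd z) - phi (snd x) - phi (snd y)"
  unfolding mdist_def
proof (rule cInf_lower)
  show "bdd_below {2 * phi (snd z) - phi (snd x) - phi (snd y) |z. anc_le M x z \<and> anc_le M y z}"
  proof (rule bdd_belowI[of _ "-4"])
    fix r assume "r \<in> {2 * phi (snd z) - phi (snd x) - phi (snd y) |z. anc_le M x z \<and> anc_le M y z}"
    then obtain z where "r = 2 * phi (snd z) - phi (snd x) - phi (snd y)" by auto
    then show "-4 \<le> r"
      using phi_abs_le_1[of "snd z"] phi_abs_le_1[of "snd x"] phi_abs_le_1[of "snd y"] by (auto simp: abs_le_iff)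
  qed
qed (use assms in blast)

lemma mdist_ge_common_anc:
  assumes M: "merge_tree M" and x: "x \<in> pts M" and y: "y \<in> pts M"
    and bound: "\<And>z. anc_le M x z \<Longrightarrow> anc_le M y z \<Longrightarrow> c \<le> 2 * phi (snd z) - phi (snd x) - phi (snd y)"
  shows "c \<le> mdist M x y"
  unfolding mdist_def
proof (rule cInf_greatest)
  show "{2 * phi (snd z) - phi (snd x) - phi (snd y) |z. anc_le M x z \<and> anc_le M y z} \<noteq> {}"
    using anc_le_root[OF M x] anc_le_root[OF M y] by blast
qed (use bound in auto)

lemma mdist_anc_le:
  assumes "anc_le M x y" "snd x = ereal s" "snd y = ereal t"
  shows "mdist M x y \<le> t - s"
proof -
  have "s \<le> t" using assms unfolding anc_le_def by simp
  have "mdist M x y \<le> 2 * phi (snd y) - phi (snd x) - phi (snd y)"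
    using mdist_le_common_anc[OF assms(1) anc_le_refl] anc_le_in_pts[OF assms(1)] by blast
  also have "\<dots> \<le> t - s" using phi_ereal_lipschitz[OF \<open>s \<le> t\<close>] assms(2,3) by simp
  finally show ?thesis .
qed

text \<open>Any path between distinct points at the same height climbs above the parent of either.\<close>
lemma mdist_branch_ge:
  assumes M: "merge_tree M" and p: "p \<in> pts M" and qq': "anc_le M q q'" and h: "snd q' = snd p"
    and fin: "snd p \<noteq> \<infinity>" and ne: "p \<noteq> q'"
  shows "2 * phi (hv M (par M (fst q'))) - phi (snd p) - phi (snd q) \<le> mdist M p q"
proof (rule mdist_ge_common_anc[OF M p])
  show "q \<in> pts M" using anc_le_in_pts[OF qq'] by blast
  have "snd q' < hv M (par M (fst q'))" using pts_finite fin h anc_le_in_pts[OF qq'] by metis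
  then have "hv M (par M (fst q')) \<noteq> -\<infinity>" by auto
  then show "2 * phi (hv M (par M (fst q'))) - phi (snd p) - phi (snd q) \<le> 2 * phi (snd z) - phi (snd p) - phi (snd q)"
    if "anc_le M p z" "anc_le M q z" for z
    using phi_mono common_anc_above_par[OF M p qq' h fin ne that] by simp
qed

lemma real_upward_induct:
  fixes a b :: real
  assumes "a \<le> b"
    and left_closed: "\<And>s. a \<le> s \<Longrightarrow> (\<And>t. a \<le> t \<Longrightarrow> t < s \<Longrightarrow> P t) \<Longrightarrow> P s"
    and right_open: "\<And>s. a \<le> s \<Longrightarrow> P s \<Longrightarrow> \<exists>\<epsilon>>0. \<forall>t. s \<le> t \<longrightarrow> t < s + \<epsilon> \<longrightarrow> P t"
  shows "P b"
proof (rule ccontr)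
  assume "\<not> P b"
  define Bad where "Bad = {t. a \<le> t \<and> \<not> P t}"
  have "b \<in> Bad" using \<open>a \<le> b\<close> \<open>\<not> P b\<close> unfolding Bad_def by simp
  have bdd: "bdd_below Bad" unfolding Bad_def by (rule bdd_belowI[of _ a]) simp
  define s where "s = Inf Bad"
  have "a \<le> s" unfolding s_def using \<open>b \<in> Bad\<close> by (intro cInf_greatest) (auto simp: Bad_def)
  have "P t" if "a \<le> t" "t < s" for t
    using that cInf_lower[OF _ bdd, of t] unfolding s_def Bad_def by force
  then have "P s" using left_closed \<open>a \<le> s\<close> by blast
  then obtain \<epsilon> where "\<epsilon> > 0" and good: "\<And>t. s \<le> t \<Longrightarrow> t < s + \<epsilon> \<Longrightarrow> P t"
    using right_open \<open>a \<le> s\<close> by blast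
  obtain t where "t \<in> Bad" "t < s + \<epsilon>"
    using cInf_lessD[of Bad "s + \<epsilon>"] \<open>b \<in> Bad\<close> \<open>\<epsilon> > 0\<close> unfolding s_def by force
  moreover have "s \<le> t" using cInf_lower[OF \<open>t \<in> Bad\<close> bdd] unfolding s_def .
  ultimately show False using good unfolding Bad_def by blast
qed

section \<open>Continuous maps shifting heights\<close>

definition critical_heights :: "'v mtree \<Rightarrow> 'w mtree \<Rightarrow> real \<Rightarrow> real \<Rightarrow> real set" where
  "critical_heights M N d s =
     insert s ((\<lambda>v. real_of_ereal (hv M v) + d) ` verts M \<union> real_of_ereal ` hv N ` verts N)"

lemma finite_critical_heights:
  "merge_tree M \<Longrightarrow> merge_tree N \<Longrightarrow> finite (critical_heights M N d s)"
  unfolding critical_heights_def by (simp add: merge_treeD(1))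

locale height_shifting_map =
  fixes M :: "'v mtree" and N :: "'w mtree" and d :: real and f :: "'v \<times> ereal \<Rightarrow> 'w \<times> ereal"
  assumes merge_tree_dom: "merge_tree M" and merge_tree_cod: "merge_tree N"
    and maps_pts: "\<And>x. x \<in> pts M \<Longrightarrow> f x \<in> pts N"
    and continuous: "mt_continuous M N f"
    and snd_map: "\<And>x. x \<in> pts M \<Longrightarrow> snd (f x) = snd x + ereal d"
begin

lemma continuous_at:
  "x \<in> pts M \<Longrightarrow> e > 0 \<Longrightarrow> \<exists>\<delta>>0. \<forall>x'\<in>pts M. mdist M x x' < \<delta> \<longrightarrow> mdist N (f x) (f x') < e"
  using continuous unfolding mt_continuous_def by blast

lemma map_root: "f (rt M, \<infinity>) = (rt N, \<infinity>)"
proof (rule pts_infinite)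
  show "f (rt M, \<infinity>) \<in> pts N" "snd (f (rt M, \<infinity>)) = \<infinity>"
    using maps_pts[OF root_in_pts] snd_map[OF root_in_pts] by simp_all
qed

lemma snd_map_finite: "x \<in> pts M \<Longrightarrow> snd x = ereal s \<Longrightarrow> snd (f x) = ereal (s + d)"
  using snd_map by simp

text \<open>Going up a short distance from \<open>x\<close> cannot leave the ancestors of \<open>f x\<close>: a point at the same
  height off that path is at distance at least the climb to the parent of \<open>f x\<close>.\<close>
lemma anc_le_map_near_above:
  assumes x: "x \<in> pts M" and fin: "snd x = ereal s"
  shows "\<exists>\<epsilon>>0. \<forall>x'. anc_le M x x' \<longrightarrow> snd x' < ereal (s + \<epsilon>) \<longrightarrow> anc_le N (f x) (f x')"
proof -
  have fx: "f x \<in> pts N" and fx_s: "snd (f x) = ereal (s + d)" using maps_pts snd_map_finite x fin by auto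
  define H where "H = hv N (par N (fst (f x)))"
  define e where "e = phi H - phi (ereal (s + d))"
  have H_gt: "ereal (s + d) < H" using pts_finite[OF fx] fx_s unfolding H_def by auto
  have "e > 0" unfolding e_def using phi_strict_mono[OF H_gt] by simp
  then obtain \<delta> where "\<delta> > 0"
    and \<delta>: "\<And>x'. x' \<in> pts M \<Longrightarrow> mdist M x x' < \<delta> \<Longrightarrow> mdist N (f x) (f x') < e"
    using continuous_at[OF x] by blast
  have "anc_le N (f x) (f x')" if xx': "anc_le M x x'" and close: "snd x' < ereal (s + min \<delta> e)" for x'
  proof (rule ccontr)
    assume not_anc: "\<not> anc_le N (f x) (f x')"
    have x': "x' \<in> pts M" using anc_le_in_pts[OF xx'] by blast
    have "snd x' \<noteq> \<infinity>" using close by auto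
    then obtain t where t: "snd x' = ereal t" using pts_finite[OF x'] by blast
    have "s \<le> t" using xx' fin t unfolding anc_le_def by simp
    define q where "q = anc N (ereal (t + d)) (f x)"
    have q: "anc_le N (f x) q" "snd q = ereal (t + d)"
      using anc_le_anc[OF merge_tree_cod fx] snd_anc[OF merge_tree_cod fx] fx_s \<open>s \<le> t\<close> unfolding q_def by auto
    have fx': "f x' \<in> pts N" "snd (f x') = ereal (t + d)" using maps_pts snd_map_finite x' t by auto
    have "mdist M x x' < \<delta>" using mdist_anc_le[OF xx' fin t] close t by simp
    then have "mdist N (f x') (f x) < e" using \<delta>[OF x'] mdist_commute[of N "f x'" "f x"] by linarith
    moreover
    have "2 * phi (hv N (par N (fst q))) - phi (snd (f x')) - phi (snd (f x)) \<le> mdist N (f x') (f x)"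
      using mdist_branch_ge[OF merge_tree_cod fx'(1) q(1)] q(1) not_anc fx' q(2) by auto
    moreover have "phi H \<le> phi (hv N (par N (fst q)))"
      using par_hv_mono[OF merge_tree_cod q(1)] q(2) H_gt unfolding H_def
      by (intro phi_mono) auto
    moreover have "phi (ereal (t + d)) - phi (ereal (s + d)) < e"
      using phi_ereal_lipschitz[of "s + d" "t + d"] \<open>s \<le> t\<close> close t by simp
    ultimately show False using fx' fx_s unfolding e_def by simp
  qed
  then show ?thesis using \<open>\<delta> > 0\<close> \<open>e > 0\<close> by (intro exI[of _ "min \<delta> e"]) auto
qed

lemma anc_le_map_near_below:
  assumes x: "x \<in> pts M" and fin: "snd x = ereal s" and q: "q \<in> pts N" "snd q = snd (f x)" and ne: "f x \<noteq> q"
  shows "\<exists>\<epsilon>>0. \<forall>x0. anc_le M x0 x \<longrightarrow> ereal (s - \<epsilon>) < snd x0 \<longrightarrow> \<not> anc_le N (f x0) q"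
proof -
  have fx: "f x \<in> pts N" and fx_s: "snd (f x) = ereal (s + d)" using maps_pts snd_map_finite x fin by auto
  define H where "H = hv N (par N (fst q))"
  define e where "e = phi H - phi (ereal (s + d))"
  have H_gt: "ereal (s + d) < H" using pts_finite[OF q(1)] q(2) fx_s unfolding H_def by auto
  have "e > 0" unfolding e_def using phi_strict_mono[OF H_gt] by simp
  then obtain \<delta> where "\<delta> > 0"
    and \<delta>: "\<And>x'. x' \<in> pts M \<Longrightarrow> mdist M x x' < \<delta> \<Longrightarrow> mdist N (f x) (f x') < e"
    using continuous_at[OF x] by blast
  have "\<not> anc_le N (f x0) q" if x0x: "anc_le M x0 x" and close: "ereal (s - \<delta>) < snd x0" for x0
  proof
    assume x0q: "anc_le N (f x0) q"
    have x0: "x0 \<in> pts M" using anc_le_in_pts[OF x0x] by blast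
    have "snd x0 \<noteq> \<infinity>" using x0x fin unfolding anc_le_def by auto
    then obtain t where t: "snd x0 = ereal t" using pts_finite[OF x0] by blast
    have "t \<le> s" using x0x fin t unfolding anc_le_def by simp
    have "mdist M x0 x < \<delta>" using mdist_anc_le[OF x0x t fin] close t by simp
    then have "mdist N (f x) (f x0) < e" using \<delta>[OF x0] mdist_commute[of M x0 x] by linarith
    moreover have "2 * phi H - phi (snd (f x)) - phi (snd (f x0)) \<le> mdist N (f x) (f x0)"
      unfolding H_def using mdist_branch_ge[OF merge_tree_cod fx x0q] q(2) fx_s ne by simp
    moreover have "phi (snd (f x0)) \<le> phi (snd (f x))"
      using snd_map_finite[OF x0 t] fx_s \<open>t \<le> s\<close> by (simp add: phi_real_mono)
    ultimately show False using fx_s \<open>e > 0\<close> unfolding e_def by simp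
  qed
  then show ?thesis using \<open>\<delta> > 0\<close> by blast
qed

lemma anc_le_map_left_closed:
  assumes y: "y \<in> pts M" "snd y = ereal s0" and "s0 < s"
    and below: "\<And>r. s0 \<le> r \<Longrightarrow> r < s \<Longrightarrow> anc_le N (f y) (f (anc M (ereal r) y))"
  shows "anc_le N (f y) (f (anc M (ereal s) y))"
proof (rule ccontr)
  assume not_anc: "\<not> ?thesis"
  have y_le: "snd y \<le> ereal r" if "s0 \<le> r" for r using y(2) that by simp
  define x where "x = anc M (ereal s) y"
  have "s0 \<le> s" using \<open>s0 < s\<close> by simp
  have x: "x \<in> pts M" "snd x = ereal s"
    using anc_le_in_pts[OF anc_le_anc[OF merge_tree_dom y(1) y_le[OF \<open>s0 \<le> s\<close>]]]
      snd_anc[OF merge_tree_dom y(1) y_le[OF \<open>s0 \<le> s\<close>]] unfolding x_def by auto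
  have fy: "f y \<in> pts N" "snd (f y) \<le> ereal (s + d)" using maps_pts y snd_map_finite \<open>s0 < s\<close> by auto
  define q where "q = anc N (ereal (s + d)) (f y)"
  have q: "anc_le N (f y) q" "snd q = ereal (s + d)"
    using anc_le_anc[OF merge_tree_cod fy] snd_anc[OF merge_tree_cod fy] unfolding q_def by auto
  have "f x \<noteq> q" using not_anc q(1) unfolding x_def by auto
  moreover have "q \<in> pts N" "snd q = snd (f x)" using anc_le_in_pts[OF q(1)] q(2) snd_map_finite[OF x] by auto
  ultimately obtain \<epsilon> where "\<epsilon> > 0"
    and far: "\<And>x0. anc_le M x0 x \<Longrightarrow> ereal (s - \<epsilon>) < snd x0 \<Longrightarrow> \<not> anc_le N (f x0) q"
    using anc_le_map_near_below[OF x] by blast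
  define r where "r = max s0 (s - \<epsilon> / 2)"
  have r: "s0 \<le> r" "r < s" "s - \<epsilon> < r" unfolding r_def using \<open>s0 < s\<close> \<open>\<epsilon> > 0\<close> by auto
  define x0 where "x0 = anc M (ereal r) y"
  have x0: "anc_le M y x0" "snd x0 = ereal r"
    using anc_le_anc[OF merge_tree_dom y(1) y_le[OF r(1)]] snd_anc[OF merge_tree_dom y(1) y_le[OF r(1)]]
    unfolding x0_def by auto
  have "anc_le M x0 x"
    unfolding x0_def x_def using anc_le_anc_mono[OF merge_tree_dom y(1) y_le[OF r(1)]] r by simp
  moreover have "anc_le N (f x0) q"
  proof (rule anc_le_linear[OF merge_tree_cod _ q(1)])
    show "anc_le N (f y) (f x0)" using below r unfolding x0_def by simp
    show "snd (f x0) \<le> snd q"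
      using snd_map_finite[OF _ x0(2)] anc_le_in_pts[OF x0(1)] q(2) r by simp
  qed
  ultimately show False using far x0(2) r(3) by simp
qed

lemma anc_le_map:
  assumes yy': "anc_le M y y'"
  shows "anc_le N (f y) (f y')"
proof (cases "snd y' = \<infinity>")
  case True
  then have "y' = (rt M, \<infinity>)" using pts_infinite anc_le_in_pts[OF yy'] by blast
  then show ?thesis using anc_le_root[OF merge_tree_cod] maps_pts anc_le_in_pts[OF yy'] map_root by simp
next
  case False
  have y: "y \<in> pts M" using anc_le_in_pts[OF yy'] by blast
  have "snd y \<noteq> \<infinity>" using False yy' unfolding anc_le_def by auto
  then obtain s0 where s0: "snd y = ereal s0" using pts_finite[OF y] by blast
  obtain t where t: "snd y' = ereal t" using pts_finite False anc_le_in_pts[OF yy'] by blast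
  have "s0 \<le> t" using yy' s0 t unfolding anc_le_def by simp
  define A where "A r = anc M (ereal r) y" for r
  have A: "anc_le M y (A r)" "snd (A r) = ereal r" if "s0 \<le> r" for r
    using anc_le_anc[OF merge_tree_dom y] snd_anc[OF merge_tree_dom y] s0 that unfolding A_def by auto
  have "anc_le N (f y) (f (A t))"
  proof (rule real_upward_induct[where P = "\<lambda>r. anc_le N (f y) (f (A r))", OF \<open>s0 \<le> t\<close>])
    fix s assume "s0 \<le> s" and below: "\<And>r. s0 \<le> r \<Longrightarrow> r < s \<Longrightarrow> anc_le N (f y) (f (A r))"
    show "anc_le N (f y) (f (A s))"
    proof (cases "s = s0")
      case True
      then show ?thesis using anc_snd_eq[OF merge_tree_dom anc_le_refl[OF y]] s0 anc_le_refl[OF maps_pts[OF y]]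
        unfolding A_def by simp
    next
      case False
      then show ?thesis
        using anc_le_map_left_closed[OF y s0] below \<open>s0 \<le> s\<close> unfolding A_def by simp
    qed
  next
    fix s assume "s0 \<le> s" and at_s: "anc_le N (f y) (f (A s))"
    obtain \<epsilon> where "\<epsilon> > 0"
      and near: "\<And>x'. anc_le M (A s) x' \<Longrightarrow> snd x' < ereal (s + \<epsilon>) \<Longrightarrow> anc_le N (f (A s)) (f x')"
      using anc_le_map_near_above[OF conjunct2[OF anc_le_in_pts[OF A(1)]] A(2)] \<open>s0 \<le> s\<close> by blast
    have "anc_le N (f y) (f (A r))" if "s \<le> r" "r < s + \<epsilon>" for r
    proof (rule anc_le_trans[OF at_s near])
      show "anc_le M (A s) (A r)"
        unfolding A_def using anc_le_anc_mono[OF merge_tree_dom y] s0 \<open>s0 \<le> s\<close> that by simp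
      show "snd (A r) < ereal (s + \<epsilon>)" using A(2) \<open>s0 \<le> s\<close> that by simp
    qed
    then show "\<exists>\<epsilon>>0. \<forall>r. s \<le> r \<longrightarrow> r < s + \<epsilon> \<longrightarrow> anc_le N (f y) (f (A r))"
      using \<open>\<epsilon> > 0\<close> by blast
  qed
  moreover have "A t = y'" unfolding A_def using anc_snd_eq[OF merge_tree_dom yy'] t by simp
  ultimately show ?thesis by simp
qed

text \<open>A point of the image above \<open>y\<close> can be slid down its edge, staying in the image and above \<open>y\<close>,
  until it reaches the height of \<open>y\<close>, a vertex height of \<open>N\<close>, or a vertex height of \<open>M\<close> shifted by \<open>d\<close>.\<close>
lemma image_anc_slide_down:
  assumes y: "y \<in> pts N" "snd y = ereal s" and "s \<le> t"
    and x: "x \<in> pts M" and fx: "f x = anc N (ereal t) y"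
  shows "\<exists>r \<in> critical_heights M N d s. s \<le> r \<and> r \<le> t \<and> anc N (ereal r) y \<in> f ` pts M"
proof -
  have y_le: "snd y \<le> ereal r" if "s \<le> r" for r using y(2) that by simp
  have y_fx: "anc_le N y (f x)" and fx_t: "snd (f x) = ereal t"
    using anc_le_anc[OF merge_tree_cod y(1) y_le] snd_anc[OF merge_tree_cod y(1) y_le] fx \<open>s \<le> t\<close> by auto
  have x_t: "snd x = ereal (t - d)" using snd_map[OF x] fx_t by (cases "snd x") auto
  define v where "v = fst x"
  have v: "v \<in> verts M" "v \<noteq> rt M" "hv M v \<le> ereal (t - d)" "ereal (t - d) < hv M (par M v)"
    using fst_pts_in_verts[OF merge_tree_dom x] pts_finite[OF x] hv_fst_pts_le[OF merge_tree_dom x] x_t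
    unfolding v_def by auto
  obtain h where h: "hv M v = ereal h" using merge_treeD(6)[OF merge_tree_dom v(1,2)] by blast
  define u where "u = fst (f x)"
  have fx_pts: "f x \<in> pts N" using maps_pts[OF x] .
  have u: "u \<in> verts N" "u \<noteq> rt N" "hv N u \<le> ereal t"
    using fst_pts_in_verts[OF merge_tree_cod fx_pts] pts_finite[OF fx_pts]
      hv_fst_pts_le[OF merge_tree_cod fx_pts] fx_t unfolding u_def by auto
  obtain k where k: "hv N u = ereal k" using merge_treeD(6)[OF merge_tree_cod u(1,2)] by blast
  define r where "r = max s (max (h + d) k)"
  have r: "s \<le> r" "r \<le> t" "h + d \<le> r" "k \<le> r" using v(3) u(3) h k \<open>s \<le> t\<close> unfolding r_def by auto
  have r_crit: "r \<in> critical_heights M N d s"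
    unfolding r_def critical_heights_def using v(1) u(1) h k
    by (auto simp: max_def image_iff intro!: bexI[of _ v] bexI[of _ u])
  define x' where "x' = (v, ereal (r - d))"
  have "ereal (r - d) \<le> ereal (t - d)" using r(2) by simp
  then have "ereal (r - d) < hv M (par M v)" using v(4) by (rule order.strict_trans1)
  then have x': "x' \<in> pts M" unfolding x'_def using edge_point_in_pts[OF v(1,2)] h r(3) by simp
  have "anc_le M x' x" using x' x x_t r(2) unfolding anc_le_def x'_def v_def by (auto intro: vanc_refl)
  then have fx'_fx: "anc_le N (f x') (f x)" by (rule anc_le_map)
  define z where "z = anc N (ereal r) y"
  have z: "anc_le N y z" "snd z = ereal r"
    using anc_le_anc[OF merge_tree_cod y(1) y_le] snd_anc[OF merge_tree_cod y(1) y_le] r(1)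
    unfolding z_def by auto
  have "anc_le N z (f x)" using anc_le_linear[OF merge_tree_cod z(1) y_fx] z(2) fx_t r(2) by simp
  then have "z = f x'"
    by (rule anc_le_same_edge_eq[OF merge_tree_cod _ fx'_fx])
       (use z(2) snd_map_finite[OF x'] fx_t k r(4) in \<open>simp_all add: x'_def u_def\<close>)
  then show ?thesis using r_crit r x' unfolding z_def by blast
qed

lemma lowest_anc_in_image:
  assumes y: "y \<in> pts N" "snd y = ereal s" and "s \<le> t" and t: "anc N (ereal t) y \<in> f ` pts M"
  shows "\<exists>r. s \<le> r \<and> r \<le> t \<and> lowest_anc_in N (f ` pts M) y = anc N (ereal r) y"
proof -
  define F where "F = critical_heights M N d s"
  define S where "S = {r. s \<le> r \<and> anc N (ereal r) y \<in> f ` pts M}"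
  have fin: "finite (S \<inter> F)"
    unfolding F_def using finite_critical_heights[OF merge_tree_dom merge_tree_cod] by simp
  have lower: "\<exists>r \<in> S \<inter> F. r \<le> t'" if "t' \<in> S" for t'
    using that image_anc_slide_down[OF y] unfolding S_def F_def by fastforce
  then obtain r0 where "r0 \<in> S \<inter> F" "r0 \<le> t" using \<open>s \<le> t\<close> t unfolding S_def by blast
  define m where "m = Min (S \<inter> F)"
  have "m \<in> S" "m \<le> r0" using Min_in[OF fin] Min_le[OF fin] \<open>r0 \<in> S \<inter> F\<close> unfolding m_def by auto
  have m_le: "m \<le> t'" if t': "t' \<in> S" for t'
  proof -
    obtain r where "r \<in> S \<inter> F" "r \<le> t'" using lower[OF t'] by blast
    then show ?thesis using Min_le[OF fin] unfolding m_def by force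
  qed
  have y_le: "snd y \<le> ereal m" using \<open>m \<in> S\<close> y(2) unfolding S_def by simp
  have "lowest_anc_in N (f ` pts M) y = anc N (ereal m) y"
  proof (rule lowest_anc_in_eqI[OF merge_tree_cod])
    show "anc N (ereal m) y \<in> f ` pts M" using \<open>m \<in> S\<close> unfolding S_def by blast
    show "anc_le N y (anc N (ereal m) y)" using anc_le_anc[OF merge_tree_cod y(1) y_le] .
    fix z' assume z': "z' \<in> f ` pts M" "anc_le N y z'"
    show "snd (anc N (ereal m) y) \<le> snd z'"
    proof (cases "snd z' = \<infinity>")
      case False
      then obtain t' where t': "snd z' = ereal t'" using pts_finite anc_le_in_pts[OF z'(2)] by blast
      have "t' \<in> S" using z' t' y(2) anc_snd_eq[OF merge_tree_cod z'(2)] unfolding S_def anc_le_def by auto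
      then show ?thesis using m_le snd_anc[OF merge_tree_cod y(1) y_le] t' by simp
    qed simp
  qed
  then show ?thesis using \<open>m \<in> S\<close> \<open>m \<le> r0\<close> \<open>r0 \<le> t\<close> unfolding S_def by auto
qed

lemma lowest_anc_in_image_close:
  assumes y: "y \<in> pts N" "y \<notin> f ` pts M" and "0 \<le> c" and shift: "shift N c y \<in> f ` pts M"
  shows "\<bar>snd (lowest_anc_in N (f ` pts M) y) - snd y\<bar> \<le> ereal c"
proof -
  have "snd y \<noteq> \<infinity>" using y map_root root_in_pts pts_infinite by (metis image_eqI)
  then obtain s where s: "snd y = ereal s" using pts_finite[OF y(1)] by blast
  have "anc N (ereal (s + c)) y \<in> f ` pts M" using shift s unfolding shift_def by simp
  then have "\<exists>r. s \<le> r \<and> r \<le> s + c \<and> lowest_anc_in N (f ` pts M) y = anc N (ereal r) y"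
    using lowest_anc_in_image[OF y(1) s] \<open>0 \<le> c\<close> by simp
  then obtain r where "s \<le> r" "r \<le> s + c" and low: "lowest_anc_in N (f ` pts M) y = anc N (ereal r) y"
    by blast
  have "snd (anc N (ereal r) y) = ereal r" using snd_anc[OF merge_tree_cod y(1)] s \<open>s \<le> r\<close> by simp
  then show ?thesis using low s \<open>s \<le> r\<close> \<open>r \<le> s + c\<close> by simp
qed

end

lemma delta_interleaving_good_map:
  assumes M: "merge_tree M" and M': "merge_tree M'" and "0 \<le> d"
    and I: "delta_interleaving M M' d a b"
  shows "good_map M M' d a"
proof -
  have a_pts: "a \<in> pts M \<rightarrow> pts M'" and b_pts: "b \<in> pts M' \<rightarrow> pts M"
    and ba: "\<And>x. x \<in> pts M \<Longrightarrow> b (a x) = shift M (2 * d) x"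
    and ab: "\<And>y. y \<in> pts M' \<Longrightarrow> a (b y) = shift M' (2 * d) y"
    using I unfolding delta_interleaving_def by auto
  interpret a: height_shifting_map M M' d a
    using I M M' unfolding delta_interleaving_def by unfold_locales auto
  interpret b: height_shifting_map M' M d b
    using I M M' unfolding delta_interleaving_def by unfold_locales auto
  have "anc_le M (shift M (2 * d) x2) (shift M (2 * d) x1)"
    if "x1 \<in> pts M" "x2 \<in> pts M" "anc_le M' (a x2) (a x1)" for x1 x2
    using b.anc_le_map[OF that(3)] ba that(1,2) by simp
  moreover have "\<bar>snd (lowest_anc_in M' (a ` pts M) y) - snd y\<bar> \<le> ereal (2 * d)"
    if "y \<in> pts M' - a ` pts M" for y
    using a.lowest_anc_in_image_close[of y "2 * d"] that ab[of y] b_pts \<open>0 \<le> d\<close> by force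
  ultimately show ?thesis
    using a_pts a.continuous a.snd_map unfolding good_map_def by blast
qed

theorem lemma39:
  fixes M :: "'v mtree" and M' :: "'w mtree" and d :: real
    and lo :: "real \<Rightarrow> (('v \<times> ereal) \<times> ('v \<times> ereal)) set"
    and lo' :: "real \<Rightarrow> (('w \<times> ereal) \<times> ('w \<times> ereal)) set"
  assumes "merge_tree M" and "merge_tree M'"
    and "layer_order M lo" and "layer_order M' lo'"
    and "d \<ge> 0"
    and "\<exists>a b. delta_interleaving M M' d a b \<and>
               monotone_map M lo M' lo' d a \<and> monotone_map M' lo' M lo d b"
  shows "\<exists>a. good_map M M' d a \<and> monotone_map M lo M' lo' d a"
proof -
  obtain a b where "delta_interleaving M M' d a b" and "monotone_map M lo M' lo' d a"
    using assms(6) by blast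
  then show ?thesis using delta_interleaving_good_map assms(1,2,5) by blast
qed

end
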